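(* Let $k,s,b_1,b_2\in\mathbb{R}$ and $\eta>0$. If there is a constant $C$ such that $$\|u_1\overline{u_2}\|_{H^{-1/2+\eta}_tH^s_x}\le C\|u_1\|_{X^{k,b_1}_{per}}\|u_2\|_{X^{k,b_2}_{per}}$$ for all (smooth, rapidly decaying in $t$) functions $u_1,u_2$ on $\mathbb{T}_x\times\mathbb{R}_t$, then $s\le 2k$ and $s<k+1$.
   Context: $\widehat f(n,\tau)$ is the Fourier transform (Fourier coefficients in $x\in\mathbb{T}$, Fourier transform in $t$); $\langle x\rangle=1+|x|$. $\|f\|_{X^{s,b}_{per}}=\big(\sum_{n\in\mathbb{Z}}\int\langle n\rangle^{2s}\langle\tau+n^2\rangle^{2b}|\widehat f(n,\tau)|^2d\tau\big)^{1/2}$, $\|f\|_{H^b_tH^s_x}=\big(\sum_n\int\langle n\rangle^{2s}\langle\tau\rangle^{2b}|\widehat f(n,\tau)|^2d\tau\big)^{1/2}$. (The paper's exponent $-1/2+$ is interpreted as $-1/2+\eta$.) *)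

theory Defs
  imports "HOL-Analysis.Analysis"
begin

text \<open>Functions on T_x x R_t are represented as u :: real \<Rightarrow> real \<Rightarrow> complex, u x t,
  2pi-periodic in x.\<close>

definition test_fun :: "(real \<Rightarrow> real \<Rightarrow> complex) \<Rightarrow> bool" where
  "test_fun u \<longleftrightarrow>
     (\<forall>x t. u (x + 2 * pi) t = u x t) \<and>
     (\<exists>D :: nat \<Rightarrow> nat \<Rightarrow> real \<Rightarrow> real \<Rightarrow> complex.
        D 0 0 = u \<and>
        (\<forall>i j x t. ((\<lambda>y. D i j y t) has_vector_derivative D (Suc i) j x t) (at x)) \<and>
        (\<forall>i j x t. ((\<lambda>y. D i j x y) has_vector_derivative D i (Suc j) x t) (at t)) \<and>
        (\<forall>i j. continuous_on UNIV (\<lambda>p. D i j (fst p) (snd p))) \<and>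
        (\<forall>i j (N::nat). \<exists>B. \<forall>x t. (1 + \<bar>t\<bar>) ^ N * norm (D i j x t) \<le> B))"

definition fourier :: "(real \<Rightarrow> real \<Rightarrow> complex) \<Rightarrow> int \<Rightarrow> real \<Rightarrow> complex" where
  "fourier u n \<tau> = integral {0..2*pi} (\<lambda>x. integral UNIV
       (\<lambda>t. u x t * exp (- \<i> * complex_of_real (real_of_int n * x + \<tau> * t))))"

definition jbr :: "real \<Rightarrow> real" where
  "jbr x = 1 + \<bar>x\<bar>"

definition Xnorm :: "real \<Rightarrow> real \<Rightarrow> (real \<Rightarrow> real \<Rightarrow> complex) \<Rightarrow> real" where
  "Xnorm s b u = sqrt (infsum (\<lambda>n::int. integral UNIV (\<lambda>\<tau>.
      jbr (real_of_int n) powr (2 * s) * jbr (\<tau> + (real_of_int n)^2) powr (2 * b)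
        * (cmod (fourier u n \<tau>))^2)) UNIV)"

definition HHnorm :: "real \<Rightarrow> real \<Rightarrow> (real \<Rightarrow> real \<Rightarrow> complex) \<Rightarrow> real" where
  "HHnorm b s u = sqrt (infsum (\<lambda>n::int. integral UNIV (\<lambda>\<tau>.
      jbr (real_of_int n) powr (2 * s) * jbr \<tau> powr (2 * b) * (cmod (fourier u n \<tau>))^2)) UNIV)"

end

theory Submission
  imports Defs "HOL-Probability.Probability" "HOL-Computational_Algebra.Polynomial" "HOL-Real_Asymp.Real_Asymp"
begin

(* Test the estimate on the Gaussian wave packets u_N(x,t) = exp (i N x - i N^2 t - t^2/4).
   Their space-time Fourier transform sits in the single mode n = N, as a Gaussian centred
   on the paraboloid tau = -N^2, so ||u_N||_{X^{k,b}} = <N>^k ||u_0||_{X^{k,b}} for every b.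
   The product u_N * cnj u_M is the single mode n = N - M times a Gaussian in t modulated
   at frequency N^2 - M^2, so its H^beta_t H^s_x norm is at least a constant times
   <N - M>^s min (1, <N^2 - M^2>^beta).  The choice M = -N gives <2N>^s <~ <N>^(2k),
   hence s <= 2k; the choice M = 0 gives <N>^(s + 2 min(beta,0)) <~ <N>^k, and
   beta = -1/2 + eta > -1/2 yields s < k + 1. *)

lemma has_integral_shift_UNIV:
  fixes f :: "real \<Rightarrow> 'b::banach"
  assumes "(f has_integral I) UNIV"
  shows "((\<lambda>x. f (x + c)) has_integral I) UNIV"
proof -
  have int: "\<And>a b. f integrable_on cbox a b"
   and lim: "\<And>e. e > 0 \<Longrightarrow> \<exists>B>0. \<forall>a b. ball 0 B \<subseteq> cbox a b \<longrightarrow> norm (integral (cbox a b) f - I) < e"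
    using assms[unfolded has_integral_alt'] by auto
  show ?thesis unfolding has_integral_alt'
  proof (intro conjI allI impI)
    fix a b :: real
    show "(\<lambda>x. if x \<in> UNIV then f (x + c) else 0) integrable_on cbox a b"
      using integrable_shift_cbox[OF int[of "a+c" "b+c"], of c] by simp
  next
    fix e :: real assume "e > 0"
    then obtain B where B: "B > 0" "\<And>a b. ball 0 B \<subseteq> cbox a b \<Longrightarrow> norm (integral (cbox a b) f - I) < e"
      using lim by blast
    show "\<exists>B>0. \<forall>a b. ball 0 B \<subseteq> cbox a b \<longrightarrow>
            norm (integral (cbox a b) (\<lambda>x. if x \<in> UNIV then f (x + c) else 0) - I) < e"
    proof (intro exI[of _ "B + \<bar>c\<bar>"] conjI allI impI)
      show "B + \<bar>c\<bar> > 0" using B by simp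
      fix a b :: real assume sub: "ball 0 (B + \<bar>c\<bar>) \<subseteq> cbox a b"
      have "ball 0 B \<subseteq> cbox (a + c) (b + c)"
      proof
        fix y assume "y \<in> ball (0::real) B"
        then have "y - c \<in> ball 0 (B + \<bar>c\<bar>)" by (auto simp: dist_real_def)
        then have "y - c \<in> cbox a b" using sub by blast
        then show "y \<in> cbox (a + c) (b + c)" by auto
      qed
      then have "norm (integral (cbox (a+c) (b+c)) f - I) < e" using B by blast
      moreover have "integral (cbox a b) (\<lambda>x. f (x + c)) = integral (cbox (a+c) (b+c)) f"
        using integral_shift_cbox[of "a+c" c "b+c" f] by simp
      ultimately show "norm (integral (cbox a b) (\<lambda>x. if x \<in> UNIV then f (x + c) else 0) - I) < e"
        by simp
    qed
  qed
qed

lemma integral_shift_UNIV: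
  fixes f :: "real \<Rightarrow> 'b::banach"
  shows "integral UNIV (\<lambda>x. f (x + c)) = integral UNIV f"
proof (cases "f integrable_on UNIV")
  case True
  then show ?thesis
    using has_integral_shift_UNIV[of f "integral UNIV f" c] by (simp add: integrable_integral integral_unique)
next
  case False
  have "\<not> (\<lambda>x. f (x + c)) integrable_on UNIV"
  proof
    assume "(\<lambda>x. f (x + c)) integrable_on UNIV"
    then obtain J where "((\<lambda>x. f (x + c)) has_integral J) UNIV" by auto
    from has_integral_shift_UNIV[OF this, of "-c"] have "f integrable_on UNIV" by auto
    with False show False by simp
  qed
  with False show ?thesis by (simp add: not_integrable_integral)
qed

lemma infsum_eq_single:
  fixes f :: "'a \<Rightarrow> 'b::{comm_monoid_add, t2_space}"
  assumes "\<And>n. n \<noteq> N \<Longrightarrow> f n = 0"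
  shows "infsum f UNIV = f N"
proof -
  have "infsum f UNIV = infsum f {N}"
    by (rule infsum_cong_neutral) (use assms in auto)
  then show ?thesis by simp
qed

lemma jbr_pos: "jbr x > 0"
  by (simp add: jbr_def add_pos_nonneg)

lemma sqrt_powr_double: "0 \<le> x \<Longrightarrow> sqrt (x powr (2 * a)) = x powr a"
  using powr_half_sqrt_powr[of x "2 * a"] by simp

section \<open>Fourier transforms of separable functions\<close>

lemma integral_exp_int_period:
  "integral {0..2*pi} (\<lambda>x. exp (\<i> * complex_of_real (real_of_int m * x))) = (if m = 0 then 2*pi else 0)"
proof (cases "m = 0")
  case False
  have "exp (\<i> * of_int m * complex_of_real (2*pi)) = 1"
    using exp_integer_2pi[of "of_int m"] by (simp add: algebra_simps)
  then show ?thesis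
    using Kronecker_Approximation_Theorem.integral_exp[of "2*pi" "\<i> * of_int m"] False
    by (simp add: mult.assoc)
qed (simp add: scaleR_conv_of_real)

definition time_fourier :: "(real \<Rightarrow> complex) \<Rightarrow> real \<Rightarrow> complex" where
  "time_fourier f \<tau> = integral UNIV (\<lambda>t. f t * exp (- \<i> * complex_of_real (\<tau> * t)))"

lemma fourier_separable:
  "fourier (\<lambda>x t. exp (\<i> * complex_of_real (real_of_int N * x)) * f t) n \<tau>
     = (if n = N then 2 * pi * time_fourier f \<tau> else 0)"
proof -
  have factor: "exp (\<i> * complex_of_real (real_of_int N * x)) * f t *
          exp (- \<i> * complex_of_real (real_of_int n * x + \<tau> * t))
      = exp (\<i> * complex_of_real (real_of_int (N - n) * x)) * (f t * exp (- \<i> * complex_of_real (\<tau> * t)))"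
    for x t
  proof -
    have "exp (\<i> * complex_of_real (real_of_int N * x)) * exp (- \<i> * complex_of_real (real_of_int n * x + \<tau> * t))
        = exp (\<i> * complex_of_real (real_of_int (N - n) * x)) * exp (- \<i> * complex_of_real (\<tau> * t))"
      by (simp add: exp_add[symmetric] algebra_simps)
    then show ?thesis by (simp add: algebra_simps)
  qed
  have "fourier (\<lambda>x t. exp (\<i> * complex_of_real (real_of_int N * x)) * f t) n \<tau>
      = integral {0..2*pi} (\<lambda>x. exp (\<i> * complex_of_real (real_of_int (N - n) * x))) * time_fourier f \<tau>"
    unfolding fourier_def factor time_fourier_def by simp
  then show ?thesis
    using integral_exp_int_period[of "N - n"] by (auto simp: scaleR_conv_of_real)
qed

lemma time_fourier_modulation:
  "time_fourier (\<lambda>t. exp (- \<i> * complex_of_real (\<omega> * t)) * f t) \<tau> = time_fourier f (\<tau> + \<omega>)"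
proof -
  have integrand: "exp (- \<i> * complex_of_real (\<omega> * t)) * f t * exp (- \<i> * complex_of_real (\<tau> * t))
      = f t * exp (- \<i> * complex_of_real ((\<tau> + \<omega>) * t))" for t
  proof -
    have e: "exp (- \<i> * complex_of_real (\<omega> * t)) * exp (- \<i> * complex_of_real (\<tau> * t))
        = exp (- \<i> * complex_of_real ((\<tau> + \<omega>) * t))"
      by (simp add: exp_add[symmetric] algebra_simps)
    have "exp (- \<i> * complex_of_real (\<omega> * t)) * f t * exp (- \<i> * complex_of_real (\<tau> * t))
        = f t * (exp (- \<i> * complex_of_real (\<omega> * t)) * exp (- \<i> * complex_of_real (\<tau> * t)))"
      by (simp only: mult_ac)
    then show ?thesis by (simp only: e)
  qed
  show ?thesis unfolding time_fourier_def integrand ..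
qed

lemma time_fourier_gaussian:
  "time_fourier (\<lambda>t. complex_of_real (exp (- (t^2) / 2))) \<sigma>
     = complex_of_real (sqrt (2*pi) * exp (- (\<sigma>^2) / 2))"
proof -
  interpret std_normal: prob_space std_normal_distribution
    using real_dist_normal_dist by (simp add: real_distribution_def)
  let ?e = "\<lambda>x. exp (\<i> * complex_of_real (- \<sigma> * x))"
  have "integrable std_normal_distribution ?e"
    by (rule std_normal.integrable_iexp) auto
  then have int: "integrable lborel (\<lambda>x. std_normal_density x *\<^sub>R ?e x)"
    by (subst (asm) integrable_density) (auto simp: normal_density_nonneg)
  have "integral\<^sup>L lborel (\<lambda>x. std_normal_density x *\<^sub>R ?e x) = char std_normal_distribution (- \<sigma>)"
    unfolding char_def by (subst integral_density) (auto simp: normal_density_nonneg)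
  then have "((\<lambda>x. std_normal_density x *\<^sub>R ?e x) has_integral complex_of_real (exp (- (\<sigma>^2) / 2))) UNIV"
    using has_integral_integral_lborel[OF int] by (simp add: char_std_normal_distribution)
  from has_integral_mult_right[OF this, of "complex_of_real (sqrt (2*pi))"]
  have "((\<lambda>t. complex_of_real (exp (- (t^2) / 2)) * exp (- \<i> * complex_of_real (\<sigma> * t)))
      has_integral complex_of_real (sqrt (2*pi) * exp (- (\<sigma>^2) / 2))) UNIV"
    by (simp add: std_normal_density_def scaleR_conv_of_real)
  then show ?thesis unfolding time_fourier_def by (rule integral_unique)
qed

lemma Xnorm_single_mode:
  assumes "\<And>n \<tau>. n \<noteq> N \<Longrightarrow> fourier u n \<tau> = 0"
  shows "Xnorm s b u = sqrt (jbr (of_int N) powr (2 * s) *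
           integral UNIV (\<lambda>\<tau>. jbr (\<tau> + (of_int N)^2) powr (2 * b) * (cmod (fourier u N \<tau>))^2))"
  unfolding Xnorm_def by (subst infsum_eq_single[where N = N]) (simp_all add: assms mult.assoc)

lemma HHnorm_single_mode:
  assumes "\<And>n \<tau>. n \<noteq> N \<Longrightarrow> fourier u n \<tau> = 0"
  shows "HHnorm b s u = sqrt (jbr (of_int N) powr (2 * s) *
           integral UNIV (\<lambda>\<tau>. jbr \<tau> powr (2 * b) * (cmod (fourier u N \<tau>))^2))"
  unfolding HHnorm_def by (subst infsum_eq_single[where N = N]) (simp_all add: assms mult.assoc)

section \<open>Gaussian wave packets\<close>

lemma poly_bounded_by_power:
  fixes p :: "complex poly"
  shows "\<exists>K d. K \<ge> 0 \<and> (\<forall>t::real. norm (poly p (complex_of_real t)) \<le> K * (1 + \<bar>t\<bar>) ^ d)"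
proof (induction p)
  case 0
  show ?case by (intro exI[of _ 0]) auto
next
  case (pCons a p)
  then obtain K d where K: "K \<ge> 0" "\<And>t::real. norm (poly p (complex_of_real t)) \<le> K * (1 + \<bar>t\<bar>) ^ d"
    by blast
  show ?case
  proof (intro exI[of _ "norm a + K"] exI[of _ "Suc d"] conjI allI)
    show "norm a + K \<ge> 0" using K by simp
    fix t :: real
    have "norm (poly (pCons a p) (complex_of_real t)) \<le> norm a + \<bar>t\<bar> * norm (poly p (complex_of_real t))"
      by (simp add: norm_triangle_le norm_mult)
    also have "\<dots> \<le> norm a + \<bar>t\<bar> * (K * (1 + \<bar>t\<bar>) ^ d)"
      using K(2)[of t] by (simp add: mult_left_mono)
    also have "\<dots> \<le> norm a * (1 + \<bar>t\<bar>) ^ Suc d + K * (1 + \<bar>t\<bar>) ^ Suc d"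
    proof -
      have "1 \<le> (1 + \<bar>t\<bar>) ^ Suc d" by (rule one_le_power) simp
      then have "norm a \<le> norm a * (1 + \<bar>t\<bar>) ^ Suc d"
        using mult_left_mono[of 1 _ "norm a"] by simp
      moreover have "\<bar>t\<bar> * (K * (1 + \<bar>t\<bar>) ^ d) \<le> K * (1 + \<bar>t\<bar>) ^ Suc d"
        using K(1) by (simp add: mult_right_mono mult_left_mono algebra_simps)
      ultimately show ?thesis by linarith
    qed
    finally show "norm (poly (pCons a p) (complex_of_real t)) \<le> (norm a + K) * (1 + \<bar>t\<bar>) ^ Suc d"
      by (simp add: algebra_simps)
  qed
qed

lemma power_mult_gaussian_le:
  fixes t :: real
  shows "(1 + \<bar>t\<bar>) ^ m * exp (- (t^2) / 4) \<le> exp ((real m + 1)^2)"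
proof -
  have "(1 + \<bar>t\<bar>) ^ m \<le> (1 + \<bar>t\<bar>) ^ Suc m" by (rule power_increasing) auto
  also have "\<dots> = (1 + ((real m + 1) * \<bar>t\<bar>) / real (Suc m)) ^ Suc m"
  proof -
    have "((real m + 1) * \<bar>t\<bar>) / real (Suc m) = \<bar>t\<bar>" by (simp add: field_simps)
    then show ?thesis by simp
  qed
  also have "\<dots> \<le> exp ((real m + 1) * \<bar>t\<bar>)"
  proof (rule exp_ge_one_plus_x_over_n_power_n)
    have "0 \<le> (real m + 1) * \<bar>t\<bar>" by simp
    then show "- real (Suc m) \<le> (real m + 1) * \<bar>t\<bar>" by linarith
  qed simp
  finally have "(1 + \<bar>t\<bar>) ^ m * exp (- (t^2) / 4) \<le> exp ((real m + 1) * \<bar>t\<bar>) * exp (- (t^2) / 4)"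
    by (simp add: mult_right_mono)
  also have "\<dots> = exp ((real m + 1) * \<bar>t\<bar> - (t^2) / 4)" by (simp add: exp_add[symmetric])
  also have "\<dots> \<le> exp ((real m + 1)^2)"
  proof -
    have "0 \<le> (\<bar>t\<bar> / 2 - (real m + 1))^2" by simp
    then show ?thesis by (simp add: power2_eq_square algebra_simps)
  qed
  finally show ?thesis .
qed

lemma poly_mult_exp_poly_rapid_decay:
  fixes p q :: "complex poly"
  assumes decay: "\<And>t. Re (poly q (complex_of_real t)) \<le> - (t^2) / 4"
  shows "\<exists>B. \<forall>t. (1 + \<bar>t\<bar>) ^ M * norm (poly p (complex_of_real t) * exp (poly q (complex_of_real t))) \<le> B"
proof -
  obtain K d where K: "K \<ge> 0" "\<And>t::real. norm (poly p (complex_of_real t)) \<le> K * (1 + \<bar>t\<bar>) ^ d"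
    using poly_bounded_by_power by blast
  have "(1 + \<bar>t\<bar>) ^ M * norm (poly p (complex_of_real t) * exp (poly q (complex_of_real t)))
      \<le> K * exp ((real (M + d) + 1)^2)" for t
  proof -
    have "norm (poly p (complex_of_real t) * exp (poly q (complex_of_real t))) \<le> K * (1 + \<bar>t\<bar>) ^ d * exp (- (t^2) / 4)"
      unfolding norm_mult norm_exp_eq_Re using K decay[of t] by (intro mult_mono) auto
    then have "(1 + \<bar>t\<bar>) ^ M * norm (poly p (complex_of_real t) * exp (poly q (complex_of_real t)))
        \<le> (1 + \<bar>t\<bar>) ^ M * (K * (1 + \<bar>t\<bar>) ^ d * exp (- (t^2) / 4))"
      by (rule mult_left_mono) simp
    also have "\<dots> = K * ((1 + \<bar>t\<bar>) ^ (M + d) * exp (- (t^2) / 4))"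
      by (simp add: power_add algebra_simps)
    also have "\<dots> \<le> K * exp ((real (M + d) + 1)^2)"
      using power_mult_gaussian_le K(1) by (rule mult_left_mono)
    finally show ?thesis .
  qed
  then show ?thesis by blast
qed

fun exp_poly_deriv :: "complex poly \<Rightarrow> nat \<Rightarrow> complex poly" where
  "exp_poly_deriv q 0 = 1"
| "exp_poly_deriv q (Suc j) = pderiv (exp_poly_deriv q j) + pderiv q * exp_poly_deriv q j"

lemma has_field_derivative_exp_poly_deriv:
  "((\<lambda>z. poly (exp_poly_deriv q j) z * exp (poly q z)) has_field_derivative
     poly (exp_poly_deriv q (Suc j)) z * exp (poly q z)) (at z)"
  by (auto intro!: derivative_eq_intros simp: algebra_simps)

lemma test_fun_exp_poly:
  assumes decay: "\<And>t. Re (poly q (complex_of_real t)) \<le> - (t^2) / 4"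
  shows "test_fun (\<lambda>x t. exp (\<i> * complex_of_real (real_of_int N * x)) * exp (poly q (complex_of_real t)))"
proof -
  define D where "D i j x t = (\<i> * of_int N)^i * exp (\<i> * of_int N * complex_of_real x) *
      (poly (exp_poly_deriv q j) (complex_of_real t) * exp (poly q (complex_of_real t)))" for i j x t
  have periodic: "exp (\<i> * complex_of_real (real_of_int N * (x + 2 * pi))) = exp (\<i> * complex_of_real (real_of_int N * x))"
    for x
  proof -
    have "exp (\<i> * complex_of_real (real_of_int N * (x + 2 * pi)))
        = exp (\<i> * complex_of_real (real_of_int N * x)) * exp ((2 * of_int N * of_real pi) * \<i>)"
      by (simp add: exp_add[symmetric] algebra_simps)
    then show ?thesis using exp_integer_2pi[of "of_int N"] by simp
  qed
  have D_00: "D 0 0 = (\<lambda>x t. exp (\<i> * complex_of_real (real_of_int N * x)) * exp (poly q (complex_of_real t)))"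
    by (simp add: D_def fun_eq_iff mult.assoc)
  have deriv_x: "((\<lambda>y. D i j y t) has_vector_derivative D (Suc i) j x t) (at x)" for i j x t
  proof -
    let ?c = "poly (exp_poly_deriv q j) (complex_of_real t) * exp (poly q (complex_of_real t))"
    have "((\<lambda>z. (\<i> * of_int N)^i * exp (\<i> * of_int N * z) * ?c) has_field_derivative
        (\<i> * of_int N)^Suc i * exp (\<i> * of_int N * z) * ?c) (at z)" for z
      by (auto intro!: derivative_eq_intros simp: algebra_simps)
    from has_vector_derivative_real_field[OF this] show ?thesis by (simp add: D_def)
  qed
  have deriv_t: "((\<lambda>y. D i j x y) has_vector_derivative D i (Suc j) x t) (at t)" for i j x t
    using has_vector_derivative_real_field[OF DERIV_cmult[OF has_field_derivative_exp_poly_deriv]]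
    by (simp add: D_def)
  have cont: "continuous_on UNIV (\<lambda>p. D i j (fst p) (snd p))" for i j
    unfolding D_def by (intro continuous_intros)
  have bounded: "\<exists>B. \<forall>x t. (1 + \<bar>t\<bar>) ^ M * cmod (D i j x t) \<le> B" for i j M
  proof -
    obtain B where B: "\<And>t. (1 + \<bar>t\<bar>) ^ M *
        norm (poly (exp_poly_deriv q j) (complex_of_real t) * exp (poly q (complex_of_real t))) \<le> B"
      using poly_mult_exp_poly_rapid_decay[OF decay] by blast
    have "(1 + \<bar>t\<bar>) ^ M * cmod (D i j x t) \<le> \<bar>of_int N\<bar>^i * B" for x t
    proof -
      have "(1 + \<bar>t\<bar>) ^ M * cmod (D i j x t) = \<bar>of_int N\<bar>^i *
          ((1 + \<bar>t\<bar>) ^ M * norm (poly (exp_poly_deriv q j) (complex_of_real t) * exp (poly q (complex_of_real t))))"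
        unfolding D_def by (simp add: norm_mult norm_power norm_exp_eq_Re mult_ac)
      also have "\<dots> \<le> \<bar>of_int N\<bar>^i * B"
        by (rule mult_left_mono[OF B]) simp
      finally show ?thesis .
    qed
    then show ?thesis by blast
  qed
  show ?thesis
    unfolding test_fun_def
    using periodic D_00 deriv_x deriv_t cont bounded by (intro conjI exI[of _ D]) auto
qed

definition wave_packet :: "int \<Rightarrow> real \<Rightarrow> real \<Rightarrow> real \<Rightarrow> complex" where
  "wave_packet N \<omega> x t = exp (\<i> * complex_of_real (real_of_int N * x)) *
      (exp (- \<i> * complex_of_real (\<omega> * t)) * complex_of_real (exp (- (t^2) / 4)))"

lemma test_fun_wave_packet: "test_fun (wave_packet N \<omega>)"
proof -
  define q where "q = [:0, - \<i> * complex_of_real \<omega>, - 1/4:]"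
  have "poly q (complex_of_real t) = - \<i> * complex_of_real (\<omega> * t) + complex_of_real (- (t^2) / 4)" for t
    by (simp add: q_def algebra_simps power2_eq_square)
  then have exp_q: "exp (poly q (complex_of_real t))
      = exp (- \<i> * complex_of_real (\<omega> * t)) * complex_of_real (exp (- (t^2) / 4))" for t
    by (simp only: exp_add exp_of_real)
  have wave_packet_eq:
    "wave_packet N \<omega> = (\<lambda>x t. exp (\<i> * complex_of_real (real_of_int N * x)) * exp (poly q (complex_of_real t)))"
    by (intro ext) (simp only: wave_packet_def exp_q)
  show ?thesis
    unfolding wave_packet_eq by (rule test_fun_exp_poly) (simp add: q_def power2_eq_square)
qed

section \<open>Norms of wave packets\<close>

lemma fourier_wave_packet:
  "fourier (wave_packet N \<omega>) n \<tau> =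
     (if n = N then 2 * pi * time_fourier (\<lambda>t. complex_of_real (exp (- (t^2) / 4))) (\<tau> + \<omega>) else 0)"
  unfolding wave_packet_def[abs_def] fourier_separable time_fourier_modulation ..

lemma Xnorm_wave_packet_on_paraboloid:
  "Xnorm k b (wave_packet N (of_int N ^ 2)) = jbr (of_int N) powr k * Xnorm k b (wave_packet 0 0)"
proof -
  define g where "g \<sigma> = jbr \<sigma> powr (2 * b) *
    (cmod (2 * pi * time_fourier (\<lambda>t. complex_of_real (exp (- (t^2) / 4))) \<sigma>))^2" for \<sigma>
  have Xnorm_eq: "Xnorm k b (wave_packet M (of_int M ^ 2)) = jbr (of_int M) powr k * sqrt (integral UNIV g)" for M
  proof -
    have "Xnorm k b (wave_packet M (of_int M ^ 2))
        = sqrt (jbr (of_int M) powr (2 * k) * integral UNIV (\<lambda>\<tau>. g (\<tau> + of_int M ^ 2)))"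
      by (subst Xnorm_single_mode[where N = M]) (simp_all add: fourier_wave_packet g_def)
    also have "\<dots> = jbr (of_int M) powr k * sqrt (integral UNIV g)"
      using jbr_pos[of "of_int M"] by (simp add: integral_shift_UNIV real_sqrt_mult sqrt_powr_double)
    finally show ?thesis .
  qed
  show ?thesis using Xnorm_eq[of N] Xnorm_eq[of 0] by (simp add: jbr_def)
qed

lemma wave_packet_mult_cnj:
  "wave_packet N \<omega> x t * cnj (wave_packet M \<mu> x t) =
     exp (\<i> * complex_of_real (real_of_int (N - M) * x)) *
       (exp (- \<i> * complex_of_real ((\<omega> - \<mu>) * t)) * complex_of_real (exp (- (t^2) / 2)))"
proof -
  let ?g = "exp (- (t^2) / 4)"
  have cnj_x: "cnj (exp (\<i> * complex_of_real (real_of_int M * x))) = exp (- (\<i> * complex_of_real (real_of_int M * x)))"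
    by (simp add: exp_cnj)
  have cnj_t: "cnj (exp (- \<i> * complex_of_real (\<mu> * t))) = exp (\<i> * complex_of_real (\<mu> * t))"
    by (simp add: exp_cnj)
  have exp_x: "exp (\<i> * complex_of_real (real_of_int N * x)) * exp (- (\<i> * complex_of_real (real_of_int M * x)))
      = exp (\<i> * complex_of_real (real_of_int (N - M) * x))"
    by (simp add: exp_add[symmetric] algebra_simps)
  have exp_t: "exp (- \<i> * complex_of_real (\<omega> * t)) * exp (\<i> * complex_of_real (\<mu> * t))
      = exp (- \<i> * complex_of_real ((\<omega> - \<mu>) * t))"
    by (simp add: exp_add[symmetric] algebra_simps)
  have gauss: "?g * ?g = exp (- (t^2) / 2)"
    by (simp add: exp_add[symmetric])
  have "wave_packet N \<omega> x t * cnj (wave_packet M \<mu> x t) =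
      exp (\<i> * complex_of_real (real_of_int N * x)) * (exp (- \<i> * complex_of_real (\<omega> * t)) * complex_of_real ?g) *
      (exp (- (\<i> * complex_of_real (real_of_int M * x))) * (exp (\<i> * complex_of_real (\<mu> * t)) * complex_of_real ?g))"
    by (simp only: wave_packet_def complex_cnj_mult cnj_x cnj_t complex_cnj_complex_of_real)
  also have "\<dots> = (exp (\<i> * complex_of_real (real_of_int N * x)) * exp (- (\<i> * complex_of_real (real_of_int M * x)))) *
      ((exp (- \<i> * complex_of_real (\<omega> * t)) * exp (\<i> * complex_of_real (\<mu> * t))) * complex_of_real (?g * ?g))"
    by (simp only: of_real_mult mult_ac)
  finally show ?thesis by (simp only: exp_x exp_t gauss)
qed

definition weighted_gaussian_integral :: "real \<Rightarrow> real \<Rightarrow> real" where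
  "weighted_gaussian_integral p \<omega> = integral UNIV (\<lambda>\<tau>. jbr \<tau> powr p * exp (- ((\<tau> + \<omega>)^2)))"

lemma HHnorm_wave_packet_mult_cnj:
  "HHnorm \<beta> s (\<lambda>x t. wave_packet N \<omega> x t * cnj (wave_packet M \<mu> x t))
     = jbr (of_int (N - M)) powr s * sqrt (8 * pi^3 * weighted_gaussian_integral (2 * \<beta>) (\<omega> - \<mu>))"
proof -
  let ?u = "\<lambda>x t. wave_packet N \<omega> x t * cnj (wave_packet M \<mu> x t)"
  let ?e = "\<lambda>\<tau>. exp (- ((\<tau> + (\<omega> - \<mu>))^2))"
  have fourier_u: "fourier ?u n \<tau> =
      (if n = N - M then 2 * pi * complex_of_real (sqrt (2*pi) * exp (- ((\<tau> + (\<omega> - \<mu>))^2) / 2)) else 0)" for n \<tau>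
    unfolding wave_packet_mult_cnj fourier_separable time_fourier_modulation time_fourier_gaussian ..
  have "(cmod (fourier ?u (N - M) \<tau>))^2 = 8 * pi^3 * ?e \<tau>" for \<tau>
  proof -
    have "(exp (- ((\<tau> + (\<omega> - \<mu>))^2) / 2))^2 = ?e \<tau>"
      by (simp add: power2_eq_square exp_add[symmetric])
    then show ?thesis
      by (simp add: fourier_u norm_mult power_mult_distrib power2_eq_square[of "sqrt _"] power2_eq_square[of pi] power3_eq_cube)
  qed
  then have "HHnorm \<beta> s ?u = sqrt (jbr (of_int (N - M)) powr (2 * s) *
      integral UNIV (\<lambda>\<tau>. jbr \<tau> powr (2 * \<beta>) * (8 * pi^3 * ?e \<tau>)))"
    by (subst HHnorm_single_mode[where N = "N - M"]) (simp_all add: fourier_u)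
  also have "integral UNIV (\<lambda>\<tau>. jbr \<tau> powr (2 * \<beta>) * (8 * pi^3 * ?e \<tau>))
      = 8 * pi^3 * weighted_gaussian_integral (2 * \<beta>) (\<omega> - \<mu>)"
    unfolding weighted_gaussian_integral_def by (simp flip: integral_mult_right add: mult_ac)
  finally show ?thesis
    using jbr_pos[of "of_int (N - M)"] by (simp add: real_sqrt_mult sqrt_powr_double)
qed

lemma weighted_gaussian_dominated:
  "\<exists>K. \<forall>\<tau>. jbr \<tau> powr p * exp (- ((\<tau> + \<omega>)^2)) \<le> K * normal_density (- \<omega>) 1 \<tau>"
proof -
  define m where "m = nat \<lceil>max p 0\<rceil>"
  define K where "K = (1 + \<bar>\<omega>\<bar>) ^ m * exp ((real m + 1)^2) * sqrt (2 * pi)"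
  have "jbr \<tau> powr p * exp (- ((\<tau> + \<omega>)^2)) \<le> K * normal_density (- \<omega>) 1 \<tau>" for \<tau>
  proof -
    let ?s = "\<tau> + \<omega>"
    have "jbr \<tau> powr p \<le> jbr \<tau> powr (real m)"
      by (intro powr_mono) (auto simp: m_def jbr_def, linarith)
    also have "\<dots> = jbr \<tau> ^ m" using jbr_pos by (simp add: powr_realpow)
    also have "\<dots> \<le> ((1 + \<bar>\<omega>\<bar>) * (1 + \<bar>?s\<bar>)) ^ m"
    proof (rule power_mono)
      have "\<bar>\<tau>\<bar> \<le> \<bar>?s\<bar> + \<bar>\<omega>\<bar>" by linarith
      then show "jbr \<tau> \<le> (1 + \<bar>\<omega>\<bar>) * (1 + \<bar>?s\<bar>)"
        unfolding jbr_def by (simp add: algebra_simps) (smt (verit) abs_ge_zero mult_nonneg_nonneg)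
    qed (use jbr_pos in \<open>auto intro: less_imp_le\<close>)
    finally have weight: "jbr \<tau> powr p \<le> (1 + \<bar>\<omega>\<bar>) ^ m * (1 + \<bar>?s\<bar>) ^ m"
      by (simp add: power_mult_distrib)
    have "(1 + \<bar>?s\<bar>) ^ m * exp (- (?s^2)) \<le> ((1 + \<bar>?s\<bar>) ^ m * exp (- (?s^2) / 4)) * exp (- (?s^2) / 2)"
    proof -
      have "exp (- (?s^2)) = exp (- (?s^2) / 4) * exp (- (?s^2) * 3 / 4)"
        by (simp add: exp_add[symmetric])
      moreover have "exp (- (?s^2) * 3 / 4) \<le> exp (- (?s^2) / 2)" by simp
      ultimately show ?thesis by (simp add: mult_left_mono mult.assoc)
    qed
    also have "\<dots> \<le> exp ((real m + 1)^2) * exp (- (?s^2) / 2)"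
      by (rule mult_right_mono[OF power_mult_gaussian_le]) simp
    finally have gauss: "(1 + \<bar>?s\<bar>) ^ m * exp (- (?s^2)) \<le> exp ((real m + 1)^2) * exp (- (?s^2) / 2)" .
    have "jbr \<tau> powr p * exp (- (?s^2)) \<le> (1 + \<bar>\<omega>\<bar>) ^ m * (1 + \<bar>?s\<bar>) ^ m * exp (- (?s^2))"
      using weight by (simp add: mult_right_mono)
    also have "\<dots> \<le> (1 + \<bar>\<omega>\<bar>) ^ m * (exp ((real m + 1)^2) * exp (- (?s^2) / 2))"
      using gauss by (simp add: mult.assoc mult_left_mono)
    also have "\<dots> = K * normal_density (- \<omega>) 1 \<tau>"
      unfolding K_def normal_density_def by simp
    finally show ?thesis .
  qed
  then show ?thesis by blast
qed

lemma weighted_gaussian_integrable: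
  "(\<lambda>\<tau>. jbr \<tau> powr p * exp (- ((\<tau> + \<omega>)^2))) integrable_on UNIV"
proof -
  obtain K where K: "\<And>\<tau>. jbr \<tau> powr p * exp (- ((\<tau> + \<omega>)^2)) \<le> K * normal_density (- \<omega>) 1 \<tau>"
    using weighted_gaussian_dominated by blast
  have "normal_density (- \<omega>) 1 integrable_on UNIV"
    using integrable_on_lborel[OF integrable_normal_density[where \<mu>="- \<omega>" and \<sigma>=1]] by simp
  then have dominant: "(\<lambda>\<tau>. K * normal_density (- \<omega>) 1 \<tau>) integrable_on UNIV"
    by (rule integrable_on_mult_right)
  show ?thesis
  proof (rule integrable_on_all_intervals_integrable_bound[OF _ _ dominant])
    fix a b :: real
    have "continuous_on (cbox a b) (\<lambda>\<tau>. jbr \<tau> powr p * exp (- ((\<tau> + \<omega>)^2)))"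
      unfolding jbr_def by (intro continuous_intros) (auto simp: add_pos_nonneg)
    then show "(\<lambda>x. if x \<in> UNIV then jbr x powr p * exp (- ((x + \<omega>)^2)) else 0) integrable_on cbox a b"
      using integrable_continuous_interval by simp
  qed (use K in simp)
qed

lemma weighted_gaussian_integral_lower_bound:
  "2 * exp (-1) * min 1 ((2 + \<bar>\<omega>\<bar>) powr p) \<le> weighted_gaussian_integral p \<omega>"
proof -
  let ?c = "exp (-1) * min 1 ((2 + \<bar>\<omega>\<bar>) powr p)"
  let ?g = "\<lambda>\<tau>. if \<tau> \<in> {-\<omega>-1..-\<omega>+1} then ?c else 0"
  have g_integral: "(?g has_integral (2 * ?c)) UNIV"
    using has_integral_restrict_UNIV[THEN iffD2, OF has_integral_const_real[of ?c "-\<omega>-1" "-\<omega>+1"]]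
    by simp
  have "?g \<tau> \<le> jbr \<tau> powr p * exp (- ((\<tau> + \<omega>)^2))" for \<tau>
  proof (cases "\<tau> \<in> {-\<omega>-1..-\<omega>+1}")
    case True
    then have near: "\<bar>\<tau> + \<omega>\<bar> \<le> 1" by auto
    then have "(\<tau> + \<omega>)^2 \<le> 1" using abs_le_square_iff[of "\<tau> + \<omega>" 1] by simp
    then have gauss: "exp (-1) \<le> exp (- ((\<tau> + \<omega>)^2))" by simp
    have "jbr \<tau> \<le> 2 + \<bar>\<omega>\<bar>" using near unfolding jbr_def by linarith
    have weight: "min 1 ((2 + \<bar>\<omega>\<bar>) powr p) \<le> jbr \<tau> powr p"
    proof (cases "p \<ge> 0")
      case True
      then have "1 \<le> jbr \<tau> powr p" by (simp add: jbr_def ge_one_powr_ge_zero)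
      then show ?thesis by simp
    next
      case False
      then have "(2 + \<bar>\<omega>\<bar>) powr p \<le> jbr \<tau> powr p"
        using \<open>jbr \<tau> \<le> 2 + \<bar>\<omega>\<bar>\<close> jbr_pos by (intro powr_mono2') auto
      then show ?thesis by simp
    qed
    show ?thesis using True mult_mono[OF weight gauss] by (simp add: mult.commute)
  qed auto
  then have "integral UNIV ?g \<le> weighted_gaussian_integral p \<omega>"
    unfolding weighted_gaussian_integral_def
    using g_integral weighted_gaussian_integrable by (intro integral_le) auto
  then show ?thesis using integral_unique[OF g_integral] by simp
qed

lemma HHnorm_wave_packet_mult_cnj_ge:
  "sqrt (16 * pi^3 * exp (-1)) * (jbr (of_int (N - M)) powr s * min 1 ((2 + \<bar>\<omega> - \<mu>\<bar>) powr \<beta>))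
     \<le> HHnorm \<beta> s (\<lambda>x t. wave_packet N \<omega> x t * cnj (wave_packet M \<mu> x t))"
proof -
  let ?m = "min 1 ((2 + \<bar>\<omega> - \<mu>\<bar>) powr \<beta>)"
  let ?m2 = "min 1 ((2 + \<bar>\<omega> - \<mu>\<bar>) powr (2 * \<beta>))"
  have "sqrt ?m2 = min 1 (sqrt ((2 + \<bar>\<omega> - \<mu>\<bar>) powr (2 * \<beta>)))"
    by (simp add: min_def)
  then have m: "sqrt (16 * pi^3 * exp (-1)) * ?m = sqrt (16 * pi^3 * exp (-1) * ?m2)"
    by (simp add: real_sqrt_mult sqrt_powr_double)
  have "16 * pi^3 * exp (-1) * ?m2 = 8 * pi^3 * (2 * exp (-1) * ?m2)"
    by simp
  also have "\<dots> \<le> 8 * pi^3 * weighted_gaussian_integral (2 * \<beta>) (\<omega> - \<mu>)"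
    using weighted_gaussian_integral_lower_bound by (rule mult_left_mono) simp
  finally have "sqrt (16 * pi^3 * exp (-1)) * ?m \<le> sqrt (8 * pi^3 * weighted_gaussian_integral (2 * \<beta>) (\<omega> - \<mu>))"
    unfolding m by (rule real_sqrt_le_mono)
  then have "jbr (of_int (N - M)) powr s * (sqrt (16 * pi^3 * exp (-1)) * ?m)
      \<le> jbr (of_int (N - M)) powr s * sqrt (8 * pi^3 * weighted_gaussian_integral (2 * \<beta>) (\<omega> - \<mu>))"
    by (rule mult_left_mono) simp
  then show ?thesis
    unfolding HHnorm_wave_packet_mult_cnj by (simp only: mult.left_commute)
qed

section \<open>Comparing growth rates in the frequency\<close>

lemma powr_growth_imp_exponent_le:
  fixes a b c D :: real
  assumes c: "c > 0" and bound: "\<And>N::nat. c * (1 + real N) powr a \<le> D * (1 + real N) powr b"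
  shows "a \<le> b"
proof (rule ccontr)
  assume "\<not> a \<le> b"
  then have "filterlim (\<lambda>N::nat. (1 + real N) powr (a - b)) at_top sequentially"
    by real_asymp
  then have "eventually (\<lambda>N::nat. (1 + real N) powr (a - b) \<ge> D / c + 1) sequentially"
    by (simp add: filterlim_at_top)
  then obtain N :: nat where N: "(1 + real N) powr (a - b) \<ge> D / c + 1"
    by (auto simp: eventually_sequentially)
  have pos: "(1 + real N) powr b > 0" by simp
  have "c * (D / c + 1) * (1 + real N) powr b \<le> c * (1 + real N) powr (a - b) * (1 + real N) powr b"
    using N c pos by (intro mult_right_mono mult_left_mono) auto
  also have "\<dots> = c * (1 + real N) powr a"
    by (simp add: powr_add[symmetric])
  also have "\<dots> \<le> D * (1 + real N) powr b"
    by (rule bound)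
  finally have "c * (D / c + 1) \<le> D" using pos by simp
  moreover have "c * (D / c + 1) = D + c" using c by (simp add: field_simps)
  ultimately show False using c by linarith
qed

lemma powr_lower_bound_of_le_double:
  fixes x y s :: real
  assumes "0 < x" "x \<le> y" "y \<le> 2 * x"
  shows "min 1 (2 powr s) * x powr s \<le> y powr s"
proof (cases "s \<ge> 0")
  case True
  have "x powr s \<le> y powr s" using assms True by (intro powr_mono2) auto
  moreover have "min 1 (2 powr s) * x powr s \<le> x powr s" by (simp add: mult_left_le_one_le)
  ultimately show ?thesis by linarith
next
  case False
  have "min 1 (2 powr s) * x powr s \<le> 2 powr s * x powr s"
    by (rule mult_right_mono) simp_all
  also have "\<dots> = (2 * x) powr s" using assms by (simp add: powr_mult)
  also have "\<dots> \<le> y powr s" using assms False by (intro powr_mono2') auto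
  finally show ?thesis .
qed

lemma min_one_powr_lower_bound:
  fixes x \<beta> :: real
  assumes "x \<ge> 0"
  shows "2 powr (min \<beta> 0) * (1 + x) powr (2 * min \<beta> 0) \<le> min 1 ((2 + x^2) powr \<beta>)"
proof (cases "\<beta> \<ge> 0")
  case True
  have "1 \<le> (2 + x^2) powr \<beta>" using True by (intro ge_one_powr_ge_zero) auto
  then show ?thesis using True by simp
next
  case False
  have "(1 + x) powr (2 * \<beta>) = ((1 + x) powr 2) powr \<beta>" by (simp add: powr_powr)
  also have "(1 + x) powr 2 = (1 + x)^2" using assms by (simp add: powr_numeral)
  finally have "2 powr \<beta> * (1 + x) powr (2 * \<beta>) = (2 * (1 + x)^2) powr \<beta>"
    using assms by (simp add: powr_mult)
  also have "\<dots> \<le> (2 + x^2) powr \<beta>"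
  proof (rule powr_mono2')
    show "0 < 2 + x^2" by (simp add: add_pos_nonneg)
    show "2 + x^2 \<le> 2 * (1 + x)^2" using assms by (simp add: power2_eq_square algebra_simps)
  qed (use False in simp)
  finally have "2 powr \<beta> * (1 + x) powr (2 * \<beta>) \<le> (2 + x^2) powr \<beta>" .
  moreover have "(2 + x^2) powr \<beta> \<le> 1"
    using False powr_mono2'[of \<beta> 1 "2 + x^2"] by simp
  ultimately show ?thesis using False by simp
qed

text \<open>The estimate tested on the pair \<open>wave_packet N (N^2)\<close>, \<open>wave_packet M (M^2)\<close>,
  with the left side bounded below and a constant absorbed into \<open>D\<close>.\<close>

definition wave_packet_bound :: "real \<Rightarrow> real \<Rightarrow> real \<Rightarrow> real \<Rightarrow> bool" where
  "wave_packet_bound s k \<beta> D \<longleftrightarrow> (\<forall>N M :: int.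
     jbr (of_int (N - M)) powr s * min 1 ((2 + \<bar>of_int N ^ 2 - of_int M ^ 2\<bar>) powr \<beta>)
       \<le> D * jbr (of_int N) powr k * jbr (of_int M) powr k)"

lemma bilinear_estimate_imp_wave_packet_bound:
  assumes "\<And>u1 u2. test_fun u1 \<Longrightarrow> test_fun u2 \<Longrightarrow>
      HHnorm \<beta> s (\<lambda>x t. u1 x t * cnj (u2 x t)) \<le> C * Xnorm k b1 u1 * Xnorm k b2 u2"
  shows "\<exists>D. wave_packet_bound s k \<beta> D"
proof -
  define c where "c = sqrt (16 * pi^3 * exp (-1))"
  define A where "A = C * Xnorm k b1 (wave_packet 0 0) * Xnorm k b2 (wave_packet 0 0)"
  have "c > 0" unfolding c_def by simp
  have "jbr (of_int (N - M)) powr s * min 1 ((2 + \<bar>of_int N ^ 2 - of_int M ^ 2\<bar>) powr \<beta>)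
      \<le> A / c * jbr (of_int N) powr k * jbr (of_int M) powr k" for N M :: int
  proof -
    have "c * (jbr (of_int (N - M)) powr s * min 1 ((2 + \<bar>of_int N ^ 2 - of_int M ^ 2\<bar>) powr \<beta>))
        \<le> HHnorm \<beta> s (\<lambda>x t. wave_packet N (of_int N ^ 2) x t * cnj (wave_packet M (of_int M ^ 2) x t))"
      unfolding c_def by (rule HHnorm_wave_packet_mult_cnj_ge)
    also have "\<dots> \<le> C * Xnorm k b1 (wave_packet N (of_int N ^ 2)) * Xnorm k b2 (wave_packet M (of_int M ^ 2))"
      by (intro assms test_fun_wave_packet)
    also have "\<dots> = A * jbr (of_int N) powr k * jbr (of_int M) powr k"
      unfolding Xnorm_wave_packet_on_paraboloid A_def by (simp only: mult_ac)
    finally show ?thesis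
      using \<open>c > 0\<close> by (simp add: field_simps)
  qed
  then show ?thesis unfolding wave_packet_bound_def by blast
qed

lemma wave_packet_bound_imp_le_double:
  assumes "wave_packet_bound s k \<beta> D"
  shows "s \<le> 2 * k"
proof (rule powr_growth_imp_exponent_le)
  show "0 < min 1 (2 powr s) * min 1 (2 powr \<beta>)" by simp
  fix N :: nat
  have jbr_N: "jbr (of_int (int N)) = 1 + real N" "jbr (of_int (- int N)) = 1 + real N"
    "jbr (of_int (int N - - int N)) = 1 + 2 * real N"
    by (simp_all add: jbr_def)
  have square: "(1 + real N) powr k * (1 + real N) powr k = (1 + real N) powr (2 * k)"
    by (metis mult_2 powr_add)
  have "jbr (of_int (int N - - int N)) powr s * min 1 ((2 + \<bar>of_int (int N) ^ 2 - of_int (- int N) ^ 2\<bar>) powr \<beta>)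
      \<le> D * jbr (of_int (int N)) powr k * jbr (of_int (- int N)) powr k"
    using assms unfolding wave_packet_bound_def by blast
  then have bound: "(1 + 2 * real N) powr s * min 1 (2 powr \<beta>) \<le> D * (1 + real N) powr (2 * k)"
    unfolding jbr_N square[symmetric] by (simp add: mult.assoc)
  have "min 1 (2 powr s) * (1 + real N) powr s \<le> (1 + 2 * real N) powr s"
    by (rule powr_lower_bound_of_le_double) auto
  then have "min 1 (2 powr s) * min 1 (2 powr \<beta>) * (1 + real N) powr s \<le> (1 + 2 * real N) powr s * min 1 (2 powr \<beta>)"
    by (simp add: mult.commute mult.left_commute mult_left_mono)
  then show "min 1 (2 powr s) * min 1 (2 powr \<beta>) * (1 + real N) powr s \<le> D * (1 + real N) powr (2 * k)"
    using bound by linarith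
qed

lemma wave_packet_bound_imp_le_shift:
  assumes "wave_packet_bound s k \<beta> D"
  shows "s + 2 * min \<beta> 0 \<le> k"
proof (rule powr_growth_imp_exponent_le)
  show "0 < 2 powr (min \<beta> 0)" by simp
  fix N :: nat
  have "jbr (of_int (int N - 0)) powr s * min 1 ((2 + \<bar>of_int (int N) ^ 2 - of_int 0 ^ 2\<bar>) powr \<beta>)
      \<le> D * jbr (of_int (int N)) powr k * jbr (of_int 0) powr k"
    using assms unfolding wave_packet_bound_def by blast
  then have bound: "(1 + real N) powr s * min 1 ((2 + (real N)^2) powr \<beta>) \<le> D * (1 + real N) powr k"
    by (simp add: jbr_def)
  have "2 powr (min \<beta> 0) * (1 + real N) powr (s + 2 * min \<beta> 0)
      = (1 + real N) powr s * (2 powr (min \<beta> 0) * (1 + real N) powr (2 * min \<beta> 0))"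
    by (simp add: powr_add mult_ac)
  also have "\<dots> \<le> (1 + real N) powr s * min 1 ((2 + (real N)^2) powr \<beta>)"
    by (intro mult_left_mono min_one_powr_lower_bound) auto
  also have "\<dots> \<le> D * (1 + real N) powr k"
    by (rule bound)
  finally show "2 powr (min \<beta> 0) * (1 + real N) powr (s + 2 * min \<beta> 0) \<le> D * (1 + real N) powr k" .
qed

theorem proposition4p4:
  fixes k s b1 b2 \<eta> :: real
  assumes "\<eta> > 0"
    and "\<exists>C. \<forall>u1 u2. test_fun u1 \<longrightarrow> test_fun u2 \<longrightarrow>
           HHnorm (-1/2 + \<eta>) s (\<lambda>x t. u1 x t * cnj (u2 x t))
             \<le> C * Xnorm k b1 u1 * Xnorm k b2 u2"
  shows "s \<le> 2 * k \<and> s < k + 1"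
proof -
  obtain C where "\<And>u1 u2. test_fun u1 \<Longrightarrow> test_fun u2 \<Longrightarrow>
      HHnorm (-1/2 + \<eta>) s (\<lambda>x t. u1 x t * cnj (u2 x t)) \<le> C * Xnorm k b1 u1 * Xnorm k b2 u2"
    using assms(2) by blast
  then obtain D where bound: "wave_packet_bound s k (-1/2 + \<eta>) D"
    using bilinear_estimate_imp_wave_packet_bound by blast
  have "s \<le> 2 * k"
    using bound by (rule wave_packet_bound_imp_le_double)
  moreover have "s + 2 * min (-1/2 + \<eta>) 0 \<le> k"
    using bound by (rule wave_packet_bound_imp_le_shift)
  ultimately show ?thesis
    using assms(1) by (auto simp: min_def split: if_splits)
qed

end
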